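(* Under the setting and assumptions of the AIRC closed loop (with $A$ Metzler and Hurwitz, $g_1\neq0$, all parameters positive), let $(z_1^*(\eta),z_2^*(\eta))$ denote the controller components of the unique equilibrium with $z_1^*>0$, i.e. $z_1^*(\eta)$ is the unique positive root of $P_1(z)=\eta g_1k_iz^2+(g_0-r)\eta z-g_nk_p\mu r$ and $z_2^*=\mu/(\eta z_1^* )$. Then, as $\eta\to\infty$: (1) if $r>g_0$, then $(z_1^*,z_2^* )\to\big((r-g_0)/(g_1k_i),\,0\big)$; (2) if $r<g_0$, then $(z_1^*,z_2^* )\to\big(0,\,(g_0-r)/(g_nrk_p)\big)$; (3) if $r=g_0$, then for every $\eta>0$, $z_1^*=\sqrt{\dfrac{g_nk_p\mu r}{\eta g_1k_i}}$ and $z_2^*=\sqrt{\dfrac{\theta g_1k_i}{\eta g_nk_p}}$; in particular both tend to $0$ while $\eta z_1^*z_2^*=\mu$ for all $\eta$.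
   Context: Setting: $A\in\mathbb{R}^{n\times n}$ Metzler (nonnegative off-diagonal entries) and Hurwitz stable (all eigenvalues with negative real part), $b_0\in\mathbb{R}^n_{\ge0}$, $\mu,\theta,k_i,k_p,\eta>0$, $r:=\mu/\theta$, $g_1:=-e_n^TA^{-1}e_1$, $g_n:=-e_n^TA^{-1}e_n$, $g_0:=-e_n^TA^{-1}b_0$, with $g_1\ne0$. The closed-loop system is $\dot x=Ax+k_iz_1e_1-k_px_nz_2e_n+b_0$, $\dot z_1=\mu-\eta z_1z_2$, $\dot z_2=\theta x_n-\eta z_1z_2$, and $e_i$ denotes the $i$-th standard basis vector. *)

theory Defs
  imports "HOL-Analysis.Analysis"
begin

text \<open>Indices 1 and n of the state space: the least and the greatest index
of the finite linearly ordered index type.\<close>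
definition first_idx :: "'n::{finite,linorder}" where
  "first_idx = Min UNIV"

definition last_idx :: "'n::{finite,linorder}" where
  "last_idx = Max UNIV"

definition metzler :: "real^'n^'n \<Rightarrow> bool" where
  "metzler A \<longleftrightarrow> (\<forall>i j. i \<noteq> j \<longrightarrow> 0 \<le> A $ i $ j)"

definition complexify :: "real^'n^'m \<Rightarrow> complex^'n^'m" where
  "complexify A = (\<chi> i j. complex_of_real (A $ i $ j))"

definition hurwitz :: "real^'n^'n \<Rightarrow> bool" where
  "hurwitz A \<longleftrightarrow> (\<forall>c::complex. (\<exists>v::complex^'n. v \<noteq> 0 \<and> complexify A *v v = c *s v) \<longrightarrow> Re c < 0)"

definition gcoef :: "((real, 'a::{finite,linorder}) vec, 'a) vec \<Rightarrow> (real, 'a) vec \<Rightarrow> real" where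
  "gcoef A v = - ((matrix_inv A *v v) $ last_idx)"

definition airc_z1 :: "real \<Rightarrow> real \<Rightarrow> real \<Rightarrow> real \<Rightarrow> real \<Rightarrow> real \<Rightarrow> real \<Rightarrow> real \<Rightarrow> real" where
  "airc_z1 g0 g1 gn ki kp mu r eta =
     (THE z. 0 < z \<and> eta * g1 * ki * z^2 + (g0 - r) * eta * z - gn * kp * mu * r = 0)"

end

theory Submission
  imports Defs
begin

text \<open>
  Dividing the defining quadratic of z1* by eta shows that z1* is the positive root of
  g1 ki z^2 - (r - g0) z - c/eta with c = gn kp mu r, and z2* = mu/(eta z1*) is, up to the factor mu,
  the positive root of the reciprocal quadratic c w^2 + (r - g0) w - g1 ki/eta. As eta grows the
  constant terms vanish, so the roots tend to (b + |b|)/(2a), which yields all three cases; for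
  r = g0 the linear terms vanish and the roots are explicit square roots.
  This needs g1 > 0 and gn > 0. For a Metzler Hurwitz matrix A the matrix -A^{-1} is nonnegative with
  positive diagonal: Brouwer's theorem on the probability simplex, applied to A + s I + e 1 1^T,
  produces either a positive v with A v < 0 or, as e tends to 0, a nonnegative eigenvector with
  nonnegative eigenvalue, which Hurwitz stability excludes; and given such a v, a vector y with
  A y \<le> 0 is nonnegative by a minimum principle.
\<close>

section \<open>The positive root of a quadratic\<close>

definition pos_root :: "real \<Rightarrow> real \<Rightarrow> real \<Rightarrow> real" where
  "pos_root a b c = (b + sqrt (b^2 + 4 * a * c)) / (2 * a)"

lemma pos_root_positive_root:
  assumes "0 < a" "0 < c"
  shows "0 < pos_root a b c" and "a * (pos_root a b c)^2 - b * pos_root a b c - c = 0"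
proof -
  define q where "q = sqrt (b^2 + 4 * a * c)"
  have q2: "q^2 = b^2 + 4 * a * c" unfolding q_def using assms by simp
  have "\<bar>b\<bar> < q" unfolding q_def using assms by (intro real_less_rsqrt) simp
  then show "0 < pos_root a b c" unfolding pos_root_def q_def[symmetric] using assms by simp
  have "4 * a * (a * (pos_root a b c)^2 - b * pos_root a b c - c) = q^2 - b^2 - 4 * a * c"
    unfolding pos_root_def q_def[symmetric] using assms by (simp add: field_simps power2_eq_square)
  then show "a * (pos_root a b c)^2 - b * pos_root a b c - c = 0" using q2 assms by simp
qed

text \<open>Two positive roots z, w of a z^2 - b z - c would have product -c/a < 0.\<close>
lemma pos_root_unique:
  assumes "0 < a" "0 < c" "0 < z" "a * z^2 - b * z - c = 0"
  shows "z = pos_root a b c"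
proof -
  define w where "w = pos_root a b c"
  have "0 < w" "a * w^2 - b * w - c = 0"
    using pos_root_positive_root[OF assms(1,2)] by (simp_all add: w_def)
  then have "(z - w) * (a * (z + w) - b) = 0"
    using assms(4) by (simp add: algebra_simps power2_eq_square)
  moreover have "a * (z + w) - b \<noteq> 0"
  proof
    assume "a * (z + w) - b = 0"
    then have "a * z^2 - (a * (z + w)) * z - c = 0" using assms(4) by simp
    then have "a * z * w = - c" by (simp add: algebra_simps power2_eq_square)
    moreover have "0 < a * z * w" using assms \<open>0 < w\<close> by simp
    ultimately show False using assms(2) by simp
  qed
  ultimately show ?thesis by (simp add: w_def)
qed

lemma the_pos_root:
  assumes "0 < a" "0 < c"
  shows "(THE z. 0 < z \<and> a * z^2 - b * z - c = 0) = pos_root a b c"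
  using pos_root_positive_root[OF assms] pos_root_unique[OF assms] by (intro the_equality) auto

lemma inverse_pos_root:
  assumes "0 < a" "0 < c" "0 < t"
  shows "1 / (t * pos_root a b (c / t)) = pos_root c (- b) (a / t)"
proof (rule pos_root_unique)
  define z where "z = pos_root a b (c / t)"
  have "0 < z" and root: "a * z^2 - b * z - c / t = 0"
    using pos_root_positive_root[of a "c / t" b] assms by (simp_all add: z_def)
  then show "0 < 1 / (t * pos_root a b (c / t))" using assms by (simp add: z_def)
  have "c * (1 / (t * z))^2 - - b * (1 / (t * z)) - a / t = - (a * z^2 - b * z - c / t) / (t * z^2)"
    using \<open>0 < z\<close> assms by (simp add: field_simps power2_eq_square)
  then show "c * (1 / (t * pos_root a b (c / t)))^2 - - b * (1 / (t * pos_root a b (c / t))) - a / t = 0"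
    using root by (simp add: z_def)
qed (use assms in simp_all)

lemma pos_root_zero:
  assumes "0 < a" "0 \<le> c"
  shows "pos_root a 0 c = sqrt (c / a)"
proof -
  have "sqrt (4 * a * c) = sqrt ((2 * a)^2 * (c / a))"
    using assms by (simp add: power2_eq_square)
  also have "\<dots> = 2 * a * sqrt (c / a)"
    unfolding real_sqrt_mult real_sqrt_abs using assms by simp
  finally have "sqrt (4 * a * c) = 2 * a * sqrt (c / a)" .
  then show ?thesis using assms by (simp add: pos_root_def)
qed

lemma pos_root_tendsto:
  assumes "0 < a"
  shows "((\<lambda>t. pos_root a b (c / t)) \<longlongrightarrow> (b + \<bar>b\<bar>) / (2 * a)) at_top"
proof -
  have "((\<lambda>t. c / t) \<longlongrightarrow> 0) at_top"
    by (intro tendsto_divide_0[OF tendsto_const] filterlim_at_top_imp_at_infinity filterlim_ident)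
  with assms have "((\<lambda>t. (b + sqrt (b^2 + 4 * a * (c / t))) / (2 * a))
      \<longlongrightarrow> (b + sqrt (b^2 + 4 * a * 0)) / (2 * a)) at_top"
    by (intro tendsto_intros) auto
  then show ?thesis by (simp add: pos_root_def)
qed

section \<open>Metzler Hurwitz matrices\<close>

lemma metzler_diag_mult_le:
  fixes A :: "real^'n^'n"
  assumes "metzler A" "\<forall>j. 0 \<le> x $ j"
  shows "A $ i $ i * x $ i \<le> (A *v x) $ i"
proof -
  have "(A *v x) $ i = A $ i $ i * x $ i + (\<Sum>j\<in>UNIV - {i}. A $ i $ j * x $ j)"
    by (simp add: matrix_vector_mult_def sum.remove)
  moreover have "0 \<le> (\<Sum>j\<in>UNIV - {i}. A $ i $ j * x $ j)"
    using assms unfolding metzler_def by (intro sum_nonneg) auto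
  ultimately show ?thesis by simp
qed

definition prob_simplex :: "(real^'n) set" where
  "prob_simplex = {x. (\<forall>i. 0 \<le> x $ i) \<and> sum (($) x) UNIV = 1}"

lemma compact_prob_simplex: "compact prob_simplex"
  unfolding compact_eq_bounded_closed
proof
  have "prob_simplex = (\<Inter>i. {x. 0 \<le> x $ i}) \<inter> {x. sum (($) x) UNIV = 1}"
    unfolding prob_simplex_def by auto
  moreover have "closed {x::real^'n. 0 \<le> x $ i}" for i
    by (intro closed_Collect_le continuous_intros)
  moreover have "closed {x::real^'n. sum (($) x) UNIV = 1}"
    by (intro closed_Collect_eq continuous_intros)
  ultimately show "closed prob_simplex" by (metis closed_INT closed_Int)
  have "norm x \<le> 1" if "x \<in> prob_simplex" for x :: "real^'n"
    using norm_le_l1_cart[of x] that by (simp add: prob_simplex_def)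
  then show "bounded prob_simplex" unfolding bounded_iff by blast
qed

lemma convex_prob_simplex: "convex prob_simplex"
  unfolding convex_def prob_simplex_def
  by (auto simp: sum.distrib simp flip: sum_distrib_left)

lemma prob_simplex_nonempty: "prob_simplex \<noteq> {}"
proof -
  have "(\<chi> i. 1 / real CARD('n)) \<in> (prob_simplex :: (real^'n) set)"
    unfolding prob_simplex_def by simp
  then show ?thesis by blast
qed

lemma prob_simplex_normalised_fixpoint:
  fixes N :: "real^'n \<Rightarrow> real^'n"
  assumes cont: "continuous_on prob_simplex N"
    and pos: "\<And>x i. x \<in> prob_simplex \<Longrightarrow> 0 < N x $ i"
  obtains x where "x \<in> prob_simplex" "\<forall>i. 0 < x $ i" "N x = sum (($) (N x)) UNIV *\<^sub>R x"
proof -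
  define f where "f x = inverse (sum (($) (N x)) UNIV) *\<^sub>R N x" for x
  have sum_pos: "0 < sum (($) (N x)) UNIV" if "x \<in> prob_simplex" for x
    using pos[OF that] by (intro sum_pos) auto
  have "continuous_on prob_simplex f"
    unfolding f_def using sum_pos
    by (intro continuous_intros cont continuous_on_component) (auto simp: less_le)
  moreover have "f \<in> prob_simplex \<rightarrow> prob_simplex"
  proof
    fix x :: "real^'n" assume x: "x \<in> prob_simplex"
    have "0 \<le> f x $ i" for i
      using pos[OF x, of i] sum_pos[OF x] by (simp add: f_def)
    moreover have "sum (($) (f x)) UNIV = 1"
      using sum_pos[OF x] by (simp add: f_def flip: sum_distrib_left)
    ultimately show "f x \<in> prob_simplex" by (simp add: prob_simplex_def)
  qed
  ultimately obtain x where x: "x \<in> prob_simplex" "f x = x"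
    using brouwer[OF compact_prob_simplex convex_prob_simplex prob_simplex_nonempty] by blast
  have "N x = sum (($) (N x)) UNIV *\<^sub>R f x"
    using sum_pos[OF x(1)] by (simp add: f_def)
  then have fixpt: "N x = sum (($) (N x)) UNIV *\<^sub>R x"
    using x(2) by simp
  moreover have "0 < x $ i" for i
  proof -
    have "N x $ i = sum (($) (N x)) UNIV * x $ i"
      using arg_cong[where f = "\<lambda>v. v $ i", OF fixpt] by simp
    then show ?thesis using pos[OF x(1), of i] sum_pos[OF x(1)] by (simp add: zero_less_mult_iff)
  qed
  ultimately show thesis using that x(1) by blast
qed

lemma metzler_perturbed_eigenvector:
  fixes A :: "real^'n^'n"
  assumes "metzler A" "0 < e"
  obtains x where "x \<in> prob_simplex" "\<forall>i. 0 < x $ i"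
    "A *v x + (\<chi> i. e) = (sum (($) (A *v x)) UNIV + e * real CARD('n)) *\<^sub>R x"
proof -
  define s where "s = (\<Sum>i\<in>UNIV. \<bar>A $ i $ i\<bar>)"
  define N where "N x = A *v x + s *\<^sub>R x + (\<chi> i. e)" for x :: "real^'n"
  have "0 < N x $ i" if "x \<in> prob_simplex" for x i
  proof -
    have "\<bar>A $ i $ i\<bar> \<le> s" unfolding s_def by (rule member_le_sum) auto
    moreover have "0 \<le> x $ i" using that by (simp add: prob_simplex_def)
    ultimately have "0 \<le> (A $ i $ i + s) * x $ i" by (intro mult_nonneg_nonneg) linarith+
    then have "0 \<le> A $ i $ i * x $ i + s * x $ i" by (simp add: distrib_right)
    also have "\<dots> \<le> (A *v x) $ i + s * x $ i"
      using metzler_diag_mult_le[OF assms(1), of x i] that by (simp add: prob_simplex_def)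
    finally show ?thesis using \<open>0 < e\<close> by (simp add: N_def)
  qed
  moreover have "continuous_on prob_simplex N"
    unfolding N_def by (intro continuous_intros)
  ultimately obtain x where x: "x \<in> prob_simplex" "\<forall>i. 0 < x $ i"
    and fixpt: "N x = sum (($) (N x)) UNIV *\<^sub>R x"
    using prob_simplex_normalised_fixpoint by blast
  have sum_N: "sum (($) (N x)) UNIV = sum (($) (A *v x)) UNIV + e * real CARD('n) + s"
    using x(1) by (simp add: N_def prob_simplex_def sum.distrib flip: sum_distrib_left)
  have "A *v x + (\<chi> i. e) = N x - s *\<^sub>R x" by (simp add: N_def)
  also have "\<dots> = (sum (($) (A *v x)) UNIV + e * real CARD('n) + s) *\<^sub>R x - s *\<^sub>R x"
    by (subst fixpt) (simp only: sum_N)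
  finally have "A *v x + (\<chi> i. e) = (sum (($) (A *v x)) UNIV + e * real CARD('n)) *\<^sub>R x"
    by (simp add: scaleR_left_distrib)
  with x show thesis using that by blast
qed

lemma hurwitz_real_eigenvalue_neg:
  fixes A :: "real^'n^'n"
  assumes "hurwitz A" "x \<noteq> 0" "A *v x = c *\<^sub>R x"
  shows "c < 0"
proof -
  define w where "w = (\<chi> i. complex_of_real (x $ i))"
  have "w \<noteq> 0" using assms(2) by (simp add: w_def vec_eq_iff)
  moreover have "complexify A *v w = complex_of_real c *s w"
  proof (subst vec_eq_iff, intro allI)
    fix i
    have "(complexify A *v w) $ i = complex_of_real ((A *v x) $ i)"
      by (simp add: complexify_def w_def matrix_vector_mult_def)
    then show "(complexify A *v w) $ i = (complex_of_real c *s w) $ i"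
      using assms(3) by (simp add: w_def)
  qed
  ultimately have "Re (complex_of_real c) < 0" using assms(1) unfolding hurwitz_def by blast
  then show ?thesis by simp
qed

lemma metzler_eigenvector_limit:
  fixes A :: "real^'n^'n" and X :: "nat \<Rightarrow> real^'n"
  defines "L x \<equiv> sum (($) (A *v x)) UNIV"
  assumes X: "\<forall>k. X k \<in> prob_simplex" and e: "e \<longlonglongrightarrow> 0"
    and eig: "\<forall>k. A *v X k + (\<chi> i. e k) = (L (X k) + e k * real CARD('n)) *\<^sub>R X k"
    and pos: "\<forall>k. 0 \<le> L (X k) + e k * real CARD('n)"
  obtains l where "l \<in> prob_simplex" "A *v l = L l *\<^sub>R l" "0 \<le> L l"
proof -
  obtain l r where l: "l \<in> prob_simplex" and r: "strict_mono r" and "(X \<circ> r) \<longlonglongrightarrow> l"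
    using seq_compactE[OF compact_imp_seq_compact[OF compact_prob_simplex] X] by blast
  then have X_lim: "(\<lambda>k. X (r k)) \<longlonglongrightarrow> l" by (simp add: o_def)
  have e_lim: "(\<lambda>k. e (r k)) \<longlonglongrightarrow> 0"
    using LIMSEQ_subseq_LIMSEQ[OF e r] by (simp add: o_def)
  have Av_lim: "(\<lambda>k. A *v X (r k)) \<longlonglongrightarrow> A *v l"
    by (rule bounded_linear.tendsto[OF matrix_vector_mul_bounded_linear X_lim])
  have L_lim: "(\<lambda>k. L (X (r k)) + e (r k) * real CARD('n)) \<longlonglongrightarrow> L l + 0 * real CARD('n)"
    unfolding L_def by (intro tendsto_intros Av_lim e_lim)
  have "(\<lambda>k. A *v X (r k) + (\<chi> i. e (r k))) \<longlonglongrightarrow> A *v l + (\<chi> i. 0)"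
    by (intro tendsto_intros Av_lim e_lim)
  moreover have "(\<lambda>k. A *v X (r k) + (\<chi> i. e (r k))) \<longlonglongrightarrow> (L l + 0 * real CARD('n)) *\<^sub>R l"
    unfolding eig[rule_format] by (intro tendsto_intros L_lim X_lim)
  ultimately have "A *v l + (\<chi> i. 0) = (L l + 0 * real CARD('n)) *\<^sub>R l"
    by (rule LIMSEQ_unique)
  then have "A *v l = L l *\<^sub>R l"
    by (simp flip: zero_vec_def)
  moreover have "0 \<le> L l"
    using LIMSEQ_le_const[OF L_lim] pos by simp
  ultimately show thesis using l that by blast
qed

lemma metzler_hurwitz_subinvariant:
  fixes A :: "real^'n^'n"
  assumes "metzler A" "hurwitz A"
  obtains v where "\<forall>i. 0 < v $ i" "\<forall>i. (A *v v) $ i < 0"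
proof -
  define L where "L x = sum (($) (A *v x)) UNIV" for x :: "real^'n"
  define e where "e k = 1 / real (Suc k)" for k
  have e_pos: "0 < e k" for k by (simp add: e_def)
  have "\<forall>k. \<exists>x. x \<in> prob_simplex \<and> (\<forall>i. 0 < x $ i)
      \<and> A *v x + (\<chi> i. e k) = (L x + e k * real CARD('n)) *\<^sub>R x"
  proof
    fix k
    show "\<exists>x. x \<in> prob_simplex \<and> (\<forall>i. 0 < x $ i)
        \<and> A *v x + (\<chi> i. e k) = (L x + e k * real CARD('n)) *\<^sub>R x"
      using metzler_perturbed_eigenvector[OF assms(1) e_pos[of k]] unfolding L_def by blast
  qed
  then obtain X where X: "\<forall>k. X k \<in> prob_simplex" "\<forall>k i. 0 < X k $ i"
    and eig: "\<forall>k. A *v X k + (\<chi> i. e k) = (L (X k) + e k * real CARD('n)) *\<^sub>R X k"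
    using choice[of "\<lambda>k x. x \<in> prob_simplex \<and> (\<forall>i. 0 < x $ i)
      \<and> A *v x + (\<chi> i. e k) = (L x + e k * real CARD('n)) *\<^sub>R x"] by blast
  show thesis
  proof (cases "\<exists>k. L (X k) + e k * real CARD('n) \<le> 0")
    case True
    text \<open>A nonpositive perturbed eigenvalue makes the perturbed eigenvector itself subinvariant.\<close>
    then obtain k where k: "L (X k) + e k * real CARD('n) \<le> 0" by blast
    have "(A *v X k) $ i < 0" for i
    proof -
      have "(A *v X k) $ i + e k = (L (X k) + e k * real CARD('n)) * X k $ i"
        using arg_cong[where f = "\<lambda>v. v $ i", OF eig[rule_format, of k]] by simp
      moreover have "(L (X k) + e k * real CARD('n)) * X k $ i \<le> 0"
        using k X(2) by (simp add: mult_nonpos_nonneg less_imp_le)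
      ultimately show ?thesis using e_pos[of k] by linarith
    qed
    with X(2) that show thesis by blast
  next
    case False
    have "e \<longlonglongrightarrow> 0"
      unfolding e_def by (rule LIMSEQ_inverse_real_of_nat[unfolded inverse_eq_divide])
    moreover have "\<forall>k. 0 \<le> L (X k) + e k * real CARD('n)"
      using False by (meson linorder_not_le less_imp_le)
    ultimately obtain l where l: "l \<in> prob_simplex" "A *v l = L l *\<^sub>R l" "0 \<le> L l"
      using metzler_eigenvector_limit[where A = A and X = X and e = e] X(1) eig unfolding L_def by blast
    moreover have "l \<noteq> 0" using l(1) by (auto simp: prob_simplex_def)
    ultimately show thesis using hurwitz_real_eigenvalue_neg[OF assms(2)] by fastforce
  qed
qed

lemma metzler_subinvariant_minimum_principle:
  fixes A :: "real^'n^'n"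
  assumes "metzler A" "\<forall>i. 0 < v $ i" "\<forall>i. (A *v v) $ i < 0" "\<forall>i. (A *v y) $ i \<le> 0"
  shows "0 \<le> y $ i"
proof -
  define t where "t = Min (range (\<lambda>j. y $ j / v $ j))"
  have "t \<in> range (\<lambda>j. y $ j / v $ j)" unfolding t_def by (rule Min_in) auto
  then obtain k where tk: "t = y $ k / v $ k" by blast
  have t_le: "t \<le> y $ j / v $ j" for j unfolding t_def by (rule Min_le) auto
  text \<open>Otherwise y - t v is a nonnegative vector vanishing at k whose image is negative at k.\<close>
  have "0 \<le> t"
  proof (rule ccontr)
    assume "\<not> 0 \<le> t"
    define u where "u = y - t *\<^sub>R v"
    have "0 \<le> u $ j" for j
      using t_le[of j] assms(2)[rule_format, of j] by (simp add: u_def pos_le_divide_eq)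
    moreover have "u $ k = 0" using tk assms(2)[rule_format, of k] by (simp add: u_def)
    ultimately have "0 \<le> (A *v u) $ k"
      using metzler_diag_mult_le[OF assms(1), of u k] by simp
    moreover have "(A *v u) $ k = (A *v y) $ k - t * (A *v v) $ k"
      by (simp add: u_def matrix_vector_mult_diff_distrib matrix_vector_mult_scaleR)
    moreover have "0 < t * (A *v v) $ k"
      using \<open>\<not> 0 \<le> t\<close> assms(3) by (simp add: mult_neg_neg)
    ultimately show False using assms(4) by (smt (verit))
  qed
  then show ?thesis
    using t_le[of i] assms(2) by (smt (verit) divide_nonneg_pos divide_less_0_iff)
qed

lemma hurwitz_invertible:
  fixes A :: "real^'n^'n"
  assumes "hurwitz A"
  shows "invertible A"
proof -
  have "x = y" if "A *v x = A *v y" for x y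
  proof (rule ccontr)
    assume "x \<noteq> y"
    moreover have "A *v (x - y) = 0 *\<^sub>R (x - y)"
      using that by (simp add: matrix_vector_mult_diff_distrib)
    ultimately show False
      using hurwitz_real_eigenvalue_neg[OF assms, of "x - y" 0] by simp
  qed
  then show ?thesis
    by (simp add: invertible_left_inverse matrix_left_invertible_injective inj_on_def)
qed

lemma matrix_vector_mul_matrix_inv:
  fixes A :: "real^'n^'n"
  assumes "invertible A"
  shows "A *v (matrix_inv A *v w) = w"
proof -
  have "A ** matrix_inv A = mat 1"
    using assms unfolding invertible_def matrix_inv_def by (rule someI_ex[THEN conjunct1])
  then show ?thesis by (simp add: matrix_vector_mul_assoc)
qed

lemma metzler_hurwitz_neg_inverse_nonneg:
  fixes A :: "real^'n^'n"
  assumes "metzler A" "hurwitz A" "\<forall>j. 0 \<le> w $ j"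
  shows "0 \<le> - (matrix_inv A *v w) $ i"
proof -
  obtain v where "\<forall>i. 0 < v $ i" "\<forall>i. (A *v v) $ i < 0"
    using metzler_hurwitz_subinvariant[OF assms(1,2)] by blast
  moreover have "A *v - (matrix_inv A *v w) = - w"
    using matrix_vector_mul_matrix_inv[OF hurwitz_invertible[OF assms(2)]]
    by (simp add: linear_neg[OF matrix_vector_mul_linear])
  ultimately show ?thesis
    using metzler_subinvariant_minimum_principle[OF assms(1), of v "- (matrix_inv A *v w)" i] assms(3)
    by simp
qed

lemma metzler_hurwitz_neg_inverse_diag_pos:
  fixes A :: "real^'n^'n"
  assumes "metzler A" "hurwitz A"
  shows "0 < - (matrix_inv A *v axis k 1) $ k"
proof -
  define y where "y = - (matrix_inv A *v axis k (1::real))"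
  have y_nonneg: "\<forall>j. 0 \<le> y $ j"
    unfolding y_def using metzler_hurwitz_neg_inverse_nonneg[OF assms] by (simp add: axis_def)
  have "A *v y = - axis k 1"
    using matrix_vector_mul_matrix_inv[OF hurwitz_invertible[OF assms(2)]]
    by (simp add: y_def linear_neg[OF matrix_vector_mul_linear])
  then have "A $ k $ k * y $ k \<le> -1"
    using metzler_diag_mult_le[OF assms(1) y_nonneg, of k] by simp
  then have "y $ k \<noteq> 0" by auto
  then show ?thesis using y_nonneg unfolding y_def by (simp add: order_less_le)
qed

section \<open>The AIRC equilibrium\<close>

lemma gcoef_nonneg:
  assumes "metzler A" "hurwitz A" "\<forall>j. 0 \<le> w $ j"
  shows "0 \<le> gcoef A w"
  unfolding gcoef_def by (rule metzler_hurwitz_neg_inverse_nonneg[OF assms])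

lemma gcoef_axis_last_pos:
  assumes "metzler A" "hurwitz A"
  shows "0 < gcoef A (axis last_idx 1)"
  unfolding gcoef_def by (rule metzler_hurwitz_neg_inverse_diag_pos[OF assms])

lemma airc_z1_eq_pos_root:
  assumes "0 < g1 * ki" "0 < gn * kp * mu * r" "0 < eta"
  shows "airc_z1 g0 g1 gn ki kp mu r eta = pos_root (g1 * ki) (r - g0) (gn * kp * mu * r / eta)"
proof -
  have "eta * g1 * ki * z^2 + (g0 - r) * eta * z - gn * kp * mu * r = 0
      \<longleftrightarrow> g1 * ki * z^2 - (r - g0) * z - gn * kp * mu * r / eta = 0" for z
    using assms(3) by (simp add: field_simps)
  then show ?thesis
    unfolding airc_z1_def by (simp only: the_pos_root assms divide_pos_pos)
qed

lemma airc_z1_pos: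
  assumes "0 < g1 * ki" "0 < gn * kp * mu * r" "0 < eta"
  shows "0 < airc_z1 g0 g1 gn ki kp mu r eta"
  using airc_z1_eq_pos_root[OF assms] pos_root_positive_root(1)[OF assms(1)] assms by simp

lemma airc_z2_eq_pos_root:
  assumes "0 < g1 * ki" "0 < gn * kp * mu * r" "0 < eta"
  shows "mu / (eta * airc_z1 g0 g1 gn ki kp mu r eta)
    = mu * pos_root (gn * kp * mu * r) (g0 - r) (g1 * ki / eta)"
  using inverse_pos_root[OF assms, of "r - g0"] airc_z1_eq_pos_root[OF assms, of g0]
  by (simp add: divide_inverse)

lemma airc_z1_tendsto:
  assumes "0 < g1 * ki" "0 < gn * kp * mu * r"
  shows "((\<lambda>eta. airc_z1 g0 g1 gn ki kp mu r eta)
    \<longlongrightarrow> (r - g0 + \<bar>r - g0\<bar>) / (2 * (g1 * ki))) at_top"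
proof (rule tendsto_cong[THEN iffD1])
  show "\<forall>\<^sub>F eta in at_top.
      pos_root (g1 * ki) (r - g0) (gn * kp * mu * r / eta) = airc_z1 g0 g1 gn ki kp mu r eta"
    using eventually_gt_at_top[of 0] by eventually_elim (simp add: airc_z1_eq_pos_root[OF assms])
qed (rule pos_root_tendsto[OF assms(1)])

lemma airc_z2_tendsto:
  assumes "0 < g1 * ki" "0 < gn * kp * mu * r"
  shows "((\<lambda>eta. mu / (eta * airc_z1 g0 g1 gn ki kp mu r eta))
    \<longlongrightarrow> mu * ((g0 - r + \<bar>g0 - r\<bar>) / (2 * (gn * kp * mu * r)))) at_top"
proof (rule tendsto_cong[THEN iffD1])
  show "\<forall>\<^sub>F eta in at_top. mu * pos_root (gn * kp * mu * r) (g0 - r) (g1 * ki / eta)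
      = mu / (eta * airc_z1 g0 g1 gn ki kp mu r eta)"
    using eventually_gt_at_top[of 0] by eventually_elim (simp add: airc_z2_eq_pos_root[OF assms])
qed (intro tendsto_mult tendsto_const pos_root_tendsto[OF assms(2)])

lemma airc_tendsto_above:
  assumes "0 < g1 * ki" "0 < gn * kp * mu * r" "g0 < r"
  shows "((\<lambda>eta. airc_z1 g0 g1 gn ki kp mu r eta) \<longlongrightarrow> (r - g0) / (g1 * ki)) at_top"
    and "((\<lambda>eta. mu / (eta * airc_z1 g0 g1 gn ki kp mu r eta)) \<longlongrightarrow> 0) at_top"
proof -
  have "g1 \<noteq> 0" "ki \<noteq> 0" using assms(1) by auto
  then have "(r - g0 + \<bar>r - g0\<bar>) / (2 * (g1 * ki)) = (r - g0) / (g1 * ki)"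
    using assms(3) by (simp add: field_simps)
  with airc_z1_tendsto[OF assms(1,2), of g0]
  show "((\<lambda>eta. airc_z1 g0 g1 gn ki kp mu r eta) \<longlongrightarrow> (r - g0) / (g1 * ki)) at_top"
    by simp
  show "((\<lambda>eta. mu / (eta * airc_z1 g0 g1 gn ki kp mu r eta)) \<longlongrightarrow> 0) at_top"
    using airc_z2_tendsto[OF assms(1,2), of g0] assms(3) by simp
qed

lemma airc_tendsto_below:
  assumes "0 < g1 * ki" "0 < gn * kp * mu * r" "r < g0"
  shows "((\<lambda>eta. airc_z1 g0 g1 gn ki kp mu r eta) \<longlongrightarrow> 0) at_top"
    and "((\<lambda>eta. mu / (eta * airc_z1 g0 g1 gn ki kp mu r eta)) \<longlongrightarrow> (g0 - r) / (gn * r * kp)) at_top"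
proof -
  show "((\<lambda>eta. airc_z1 g0 g1 gn ki kp mu r eta) \<longlongrightarrow> 0) at_top"
    using airc_z1_tendsto[OF assms(1,2), of g0] assms(3) by simp
  have "gn \<noteq> 0" "kp \<noteq> 0" "mu \<noteq> 0" "r \<noteq> 0" using assms(2) by auto
  then have "mu * ((g0 - r + \<bar>g0 - r\<bar>) / (2 * (gn * kp * mu * r))) = (g0 - r) / (gn * r * kp)"
    using assms(3) by (simp add: field_simps)
  then show "((\<lambda>eta. mu / (eta * airc_z1 g0 g1 gn ki kp mu r eta)) \<longlongrightarrow> (g0 - r) / (gn * r * kp)) at_top"
    using airc_z2_tendsto[OF assms(1,2), of g0] by simp
qed

lemma airc_balanced:
  assumes "0 < g1" "0 < gn" "0 < mu" "0 < theta" "0 < ki" "0 < kp" "r = mu / theta"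
  shows "\<forall>eta>0. airc_z1 r g1 gn ki kp mu r eta = sqrt (gn * kp * mu * r / (eta * g1 * ki))
      \<and> mu / (eta * airc_z1 r g1 gn ki kp mu r eta) = sqrt (theta * g1 * ki / (eta * gn * kp))
      \<and> eta * airc_z1 r g1 gn ki kp mu r eta * (mu / (eta * airc_z1 r g1 gn ki kp mu r eta)) = mu"
    and "((\<lambda>eta. airc_z1 r g1 gn ki kp mu r eta) \<longlongrightarrow> 0) at_top"
    and "((\<lambda>eta. mu / (eta * airc_z1 r g1 gn ki kp mu r eta)) \<longlongrightarrow> 0) at_top"
proof -
  have a: "0 < g1 * ki" and c: "0 < gn * kp * mu * r" using assms by simp_all
  show "((\<lambda>eta. airc_z1 r g1 gn ki kp mu r eta) \<longlongrightarrow> 0) at_top"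
    using airc_z1_tendsto[OF a c, of r] by simp
  show "((\<lambda>eta. mu / (eta * airc_z1 r g1 gn ki kp mu r eta)) \<longlongrightarrow> 0) at_top"
    using airc_z2_tendsto[OF a c, of r] by simp
  show "\<forall>eta>0. airc_z1 r g1 gn ki kp mu r eta = sqrt (gn * kp * mu * r / (eta * g1 * ki))
      \<and> mu / (eta * airc_z1 r g1 gn ki kp mu r eta) = sqrt (theta * g1 * ki / (eta * gn * kp))
      \<and> eta * airc_z1 r g1 gn ki kp mu r eta * (mu / (eta * airc_z1 r g1 gn ki kp mu r eta)) = mu"
  proof (intro allI impI conjI)
    fix eta :: real assume "0 < eta"
    have z1: "airc_z1 r g1 gn ki kp mu r eta = pos_root (g1 * ki) 0 (gn * kp * mu * r / eta)"
      and z2: "mu / (eta * airc_z1 r g1 gn ki kp mu r eta)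
        = mu * pos_root (gn * kp * mu * r) 0 (g1 * ki / eta)"
      using airc_z1_eq_pos_root[OF a c \<open>0 < eta\<close>, of r]
        airc_z2_eq_pos_root[OF a c \<open>0 < eta\<close>, of r]
      by simp_all
    show "airc_z1 r g1 gn ki kp mu r eta = sqrt (gn * kp * mu * r / (eta * g1 * ki))"
      unfolding z1 using pos_root_zero[OF a, of "gn * kp * mu * r / eta"] c \<open>0 < eta\<close>
      by (simp add: mult.assoc mult.left_commute)
    have "mu * sqrt (g1 * ki / eta / (gn * kp * mu * r))
        = sqrt (mu^2 * (g1 * ki / eta / (gn * kp * mu * r)))"
      unfolding real_sqrt_mult real_sqrt_abs using assms(3) by simp
    also have "mu^2 * (g1 * ki / eta / (gn * kp * mu * r)) = theta * g1 * ki / (eta * gn * kp)"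
      unfolding assms(7) using assms(1-6) \<open>0 < eta\<close> by (simp add: field_simps power2_eq_square)
    finally show "mu / (eta * airc_z1 r g1 gn ki kp mu r eta) = sqrt (theta * g1 * ki / (eta * gn * kp))"
      unfolding z2 using pos_root_zero[OF c, of "g1 * ki / eta"] a \<open>0 < eta\<close> by simp
    show "eta * airc_z1 r g1 gn ki kp mu r eta * (mu / (eta * airc_z1 r g1 gn ki kp mu r eta)) = mu"
      using airc_z1_pos[OF a c \<open>0 < eta\<close>, of r] \<open>0 < eta\<close> by simp
  qed
qed

theorem mainTheorem2:
  fixes A :: "((real, 'n::{finite,linorder}) vec, 'n) vec" and b0 :: "(real, 'n) vec"
    and mu theta ki kp :: real
    and z1 z2 :: "real \<Rightarrow> real"
  assumes "metzler A" and "hurwitz A"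
    and "\<forall>i. 0 \<le> b0 $ i"
    and "0 < mu" and "0 < theta" and "0 < ki" and "0 < kp"
    and "gcoef A (axis first_idx 1) \<noteq> 0"
  defines "r \<equiv> mu / theta"
    and "g0 \<equiv> gcoef A b0"
    and "g1 \<equiv> gcoef A (axis first_idx 1)"
    and "gn \<equiv> gcoef A (axis last_idx 1)"
  assumes z1_def: "z1 = (\<lambda>eta. airc_z1 g0 g1 gn ki kp mu r eta)"
    and z2_def: "z2 = (\<lambda>eta. mu / (eta * z1 eta))"
  shows "(r > g0 \<longrightarrow> ((z1 \<longlongrightarrow> (r - g0) / (g1 * ki)) at_top \<and> (z2 \<longlongrightarrow> 0) at_top))
       \<and> (r < g0 \<longrightarrow> ((z1 \<longlongrightarrow> 0) at_top \<and> (z2 \<longlongrightarrow> (g0 - r) / (gn * r * kp)) at_top))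
       \<and> (r = g0 \<longrightarrow>
            (\<forall>eta>0. z1 eta = sqrt (gn * kp * mu * r / (eta * g1 * ki))
                   \<and> z2 eta = sqrt (theta * g1 * ki / (eta * gn * kp))
                   \<and> eta * z1 eta * z2 eta = mu)
            \<and> (z1 \<longlongrightarrow> 0) at_top \<and> (z2 \<longlongrightarrow> 0) at_top)"
proof -
  have "0 \<le> g1"
    unfolding g1_def using gcoef_nonneg[OF assms(1,2)] by (simp add: axis_def)
  then have g1: "0 < g1" using assms(8) g1_def by simp
  have gn: "0 < gn" unfolding gn_def by (rule gcoef_axis_last_pos[OF assms(1,2)])
  have a: "0 < g1 * ki" and c: "0 < gn * kp * mu * r"
    using g1 gn assms(4-7) by (simp_all add: r_def)
  have "r = g0 \<longrightarrow> (\<forall>eta>0. z1 eta = sqrt (gn * kp * mu * r / (eta * g1 * ki))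
      \<and> z2 eta = sqrt (theta * g1 * ki / (eta * gn * kp)) \<and> eta * z1 eta * z2 eta = mu)
      \<and> (z1 \<longlongrightarrow> 0) at_top \<and> (z2 \<longlongrightarrow> 0) at_top"
    using airc_balanced[OF g1 gn assms(4-7) r_def[THEN meta_eq_to_obj_eq]]
    unfolding z2_def z1_def by blast
  then show ?thesis
    using airc_tendsto_above[OF a c] airc_tendsto_below[OF a c] unfolding z2_def z1_def by blast
qed

end
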